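(* Let $\Gamma$ be a MaxSAT instance encoded with blocking variables $b_1,\dots,b_m$. If there is a derivation in the cost-SR calculus from $\Gamma$ that contains $k$ unit clauses $b_{i_1},\dots,b_{i_k}$ for $k$ distinct indices $i_1,\dots,i_k$, then $\mathrm{cost}(\Gamma)\ge k$. If moreover the derivation also contains all unit clauses $\lnot b_j$ for $j\notin\{i_1,\dots,i_k\}$, then $\mathrm{cost}(\Gamma)=k$.
   Context: Literals are variables $x$ or negations $\lnot x$; a clause is a disjunction of literals; a CNF is identified with the multiset of its clauses; $\mathrm{Var}(\Gamma)$ is its set of variables. A substitution $\sigma$ maps each variable to $0$, $1$ or a literal, extended by $\sigma(0)=0,\sigma(1)=1,\sigma(\lnot x)=\lnot\sigma(x)$; composition is $(\sigma\circ\tau)(x)=\sigma(\tau(x))$. A (partial) assignment is a substitution with $\sigma(x)\in\{0,1,x\}$ for all $x$; its domain is $\sigma^{-1}(\{0,1\})$; it is total if it assigns all variables a Boolean value. $C{\upharpoonright}_\sigma$ is the clause obtained by applying $\sigma$ to every literal and simplifying ($D\lor 0=D$, $D\lor 1=1$, repeated literals merged); $\sigma$ satisfies $C$ if $C{\upharpoonright}_\sigma=1$ or is a tautology. $\Gamma{\upharpoonright}_\sigma$ is the multiset of $C{\upharpoonright}_\sigma$ for $C\in\Gamma$ with $C{\upharpoonright}_\sigma\ne 1$. For a clause $C$, $\lnot C$ denotes the partial assignment setting all literals of $C$ to $0$; $\tau\supseteq\rho$ means $\tau$ extends $\rho$. Unit propagation repeatedly picks a unit clause $\ell$, deletes clauses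 containing $\ell$ and removes $\lnot\ell$ from the others, until no unit clause remains. $\Gamma\vdash_1 C$ means unit propagation on $\Gamma{\upharpoonright}_{\lnot C}$ produces the empty clause; $\Gamma\vdash_1\Delta$ means $\Gamma\vdash_1 D$ for all $D\in\Delta$. A MaxSAT instance encoded with blocking variables is a CNF (of hard clauses) $\Gamma=H\cup\{C_1\lor b_1,\dots,C_m\lor b_m\}$ where $b_1,\dots,b_m$ are distinct variables (blocking variables) not occurring in $H,C_1,\dots,C_m$ (the soft clauses $\lnot b_1,\dots,\lnot b_m$ are implicit). For a total assignment $\alpha$, $\mathrm{cost}(\alpha)=\sum_{i=1}^m\alpha(b_i)$, and $\mathrm{cost}(\Gamma)=\min\{\mathrm{cost}(\alpha):\alpha\text{ total},\ \alpha\models\Gamma\}$ (same definition for any CNF containing the designated blocking variables). A clause $C$ is cost-SR w.r.t. $\Gamma$ if there is a substitution $\sigma$ with (1) $\Gamma{\upharpoonright}_{\lnot C}\vdash_1(\Gamma\cup\{C\}){\upharpoonright}_\sigma$ and (2) $\mathrm{cost}(\tau\circ\sigma)\le\mathrm{cost}(\tau)$ for every total assignment $\tau\supseteq\lnot C$. A derivation in the cost-SR calculus from $\Gamma$ is a sequence of clauses $D_1,\dots,D_t$ where each $D_i$ is in $\Gamma$, or follows from earlier clauses of $\Gamma\cup\{D_1,\dots,D_{i-1}\}$ by weakening (from $A$ infer any $B\supseteq A$) or resolution (from $A\lor x$ and $B\lor\lnot x$ infer $A\lor B$), or is cost-SR w.r.t. $\Gamma\cup\{D_1,\dots,D_{i-1}\}$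 with $\mathrm{Var}(D_i)\subseteq\mathrm{Var}(\Gamma)$ (the witnessing substitution is attached). *)

theory Defs
  imports Main "HOL-Library.Extended_Nat"
begin

datatype 'v lit = Pos 'v | Neg 'v

fun var :: "'v lit \<Rightarrow> 'v" where
  "var (Pos x) = x" | "var (Neg x) = x"

fun neglit :: "'v lit \<Rightarrow> 'v lit" where
  "neglit (Pos x) = Neg x" | "neglit (Neg x) = Pos x"

type_synonym 'v clause = "'v lit set"
type_synonym 'v cnf = "'v clause set"

definition vars_cl :: "'v clause \<Rightarrow> 'v set" where
  "vars_cl c = var ` c"

definition vars :: "'v cnf \<Rightarrow> 'v set" where
  "vars F = (\<Union>c\<in>F. vars_cl c)"

definition tautology :: "'v clause \<Rightarrow> bool" where
  "tautology c \<longleftrightarrow> (\<exists>x. Pos x \<in> c \<and> Neg x \<in> c)"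

text \<open>Value of a substitution at a variable: a constant 0/1 or a literal.\<close>
datatype 'v sv = SC bool | SL "'v lit"

type_synonym 'v subst = "'v \<Rightarrow> 'v sv"

fun negsv :: "'v sv \<Rightarrow> 'v sv" where
  "negsv (SC b) = SC (\<not> b)" | "negsv (SL l) = SL (neglit l)"

fun applit :: "'v subst \<Rightarrow> 'v lit \<Rightarrow> 'v sv" where
  "applit \<sigma> (Pos x) = \<sigma> x" | "applit \<sigma> (Neg x) = negsv (\<sigma> x)"

text \<open>Restriction of a clause: None encodes the constant 1 (clause satisfied).\<close>
definition restrict :: "'v subst \<Rightarrow> 'v clause \<Rightarrow> 'v clause option" where
  "restrict \<sigma> c = (if \<exists>l\<in>c. applit \<sigma> l = SC True then None
                    else Some {l'. \<exists>l\<in>c. applit \<sigma> l = SL l'})"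

definition restrict_cnf :: "'v subst \<Rightarrow> 'v cnf \<Rightarrow> 'v cnf" where
  "restrict_cnf \<sigma> F = {c'. \<exists>c\<in>F. restrict \<sigma> c = Some c'}"

definition negC :: "'v clause \<Rightarrow> 'v subst" where
  "negC c x = (if Pos x \<in> c then SC False else if Neg x \<in> c then SC True else SL (Pos x))"

definition propagate :: "'v lit \<Rightarrow> 'v cnf \<Rightarrow> 'v cnf" where
  "propagate l F = {c - {neglit l} | c. c \<in> F \<and> l \<notin> c}"

inductive up_refutes :: "'v cnf \<Rightarrow> bool" where
  empty: "{} \<in> F \<Longrightarrow> up_refutes F"
| unit: "{l} \<in> F \<Longrightarrow> up_refutes (propagate l F) \<Longrightarrow> up_refutes F"

definition rup :: "'v cnf \<Rightarrow> 'v clause \<Rightarrow> bool" where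
  "rup F c \<longleftrightarrow> tautology c \<or> up_refutes (restrict_cnf (negC c) F)"

fun lit_val :: "('v \<Rightarrow> bool) \<Rightarrow> 'v lit \<Rightarrow> bool" where
  "lit_val \<tau> (Pos x) = \<tau> x" | "lit_val \<tau> (Neg x) = (\<not> \<tau> x)"

definition models :: "('v \<Rightarrow> bool) \<Rightarrow> 'v cnf \<Rightarrow> bool" where
  "models \<alpha> F \<longleftrightarrow> (\<forall>c\<in>F. \<exists>l\<in>c. lit_val \<alpha> l)"

fun sv_val :: "('v \<Rightarrow> bool) \<Rightarrow> 'v sv \<Rightarrow> bool" where
  "sv_val \<tau> (SC b) = b" | "sv_val \<tau> (SL l) = lit_val \<tau> l"

definition comp_assign :: "('v \<Rightarrow> bool) \<Rightarrow> 'v subst \<Rightarrow> ('v \<Rightarrow> bool)" where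
  "comp_assign \<tau> \<sigma> x = sv_val \<tau> (\<sigma> x)"

text \<open>Cost w.r.t. blocking variables \<open>b 0, ..., b (m-1)\<close>.\<close>
definition cost_assign :: "(nat \<Rightarrow> 'v) \<Rightarrow> nat \<Rightarrow> ('v \<Rightarrow> bool) \<Rightarrow> nat" where
  "cost_assign b m \<alpha> = (\<Sum>i<m. if \<alpha> (b i) then 1 else 0)"

text \<open>Minimum cost of a satisfying total assignment; \<open>\<infinity>\<close> if unsatisfiable.\<close>
definition cost_cnf :: "(nat \<Rightarrow> 'v) \<Rightarrow> nat \<Rightarrow> 'v cnf \<Rightarrow> enat" where
  "cost_cnf b m F = (INF \<alpha>\<in>{\<alpha>. models \<alpha> F}. enat (cost_assign b m \<alpha>))"

definition falsifies :: "('v \<Rightarrow> bool) \<Rightarrow> 'v clause \<Rightarrow> bool" where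
  "falsifies \<tau> c \<longleftrightarrow> (\<forall>l\<in>c. \<not> lit_val \<tau> l)"

definition cost_SR_wit :: "(nat \<Rightarrow> 'v) \<Rightarrow> nat \<Rightarrow> 'v cnf \<Rightarrow> 'v clause \<Rightarrow> 'v subst \<Rightarrow> bool" where
  "cost_SR_wit b m F c \<sigma> \<longleftrightarrow>
     (\<forall>d\<in>restrict_cnf \<sigma> (F \<union> {c}). rup (restrict_cnf (negC c) F) d) \<and>
     (\<forall>\<tau>. falsifies \<tau> c \<longrightarrow> cost_assign b m (comp_assign \<tau> \<sigma>) \<le> cost_assign b m \<tau>)"

definition deriv_step :: "(nat \<Rightarrow> 'v) \<Rightarrow> nat \<Rightarrow> 'v cnf \<Rightarrow> 'v cnf \<Rightarrow> 'v clause \<Rightarrow> bool" where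
  "deriv_step b m G E d \<longleftrightarrow> finite d \<and>
     (d \<in> G
      \<or> (\<exists>a\<in>G \<union> E. a \<subseteq> d)
      \<or> (\<exists>a a' x. insert (Pos x) a \<in> G \<union> E \<and> insert (Neg x) a' \<in> G \<union> E \<and> d = a \<union> a')
      \<or> ((\<exists>\<sigma>. cost_SR_wit b m (G \<union> E) d \<sigma>) \<and> vars_cl d \<subseteq> vars G))"

definition cost_SR_derivation :: "(nat \<Rightarrow> 'v) \<Rightarrow> nat \<Rightarrow> 'v cnf \<Rightarrow> 'v clause list \<Rightarrow> bool" where
  "cost_SR_derivation b m G ds \<longleftrightarrow>
     (\<forall>i<length ds. deriv_step b m G (set (take i ds)) (ds ! i))"

definition maxsat_cnf :: "'v cnf \<Rightarrow> (nat \<Rightarrow> 'v clause) \<Rightarrow> (nat \<Rightarrow> 'v) \<Rightarrow> nat \<Rightarrow> 'v cnf" where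
  "maxsat_cnf H C b m = H \<union> {insert (Pos (b i)) (C i) | i. i < m}"

definition maxsat_instance :: "'v cnf \<Rightarrow> (nat \<Rightarrow> 'v clause) \<Rightarrow> (nat \<Rightarrow> 'v) \<Rightarrow> nat \<Rightarrow> bool" where
  "maxsat_instance H C b m \<longleftrightarrow>
     finite H \<and> (\<forall>c\<in>H. finite c) \<and> (\<forall>i<m. finite (C i)) \<and>
     inj_on b {..<m} \<and>
     (\<forall>i<m. b i \<notin> vars H \<and> (\<forall>j<m. b i \<notin> vars_cl (C j)))"

end

theory Submission
  imports Defs
begin

text \<open>Every derivation step keeps the minimum cost unchanged: a total assignment \<open>\<tau>\<close> satisfying
  the clauses so far either already satisfies the new clause, or the clause is a cost-SR clause
  whose witness \<open>\<sigma>\<close> repairs \<open>\<tau>\<close> into the model \<open>\<tau> \<circ> \<sigma>\<close> of no larger cost (clauses obtained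
  by resolution or weakening cannot be falsified).  So \<open>\<Gamma>\<close> and \<open>\<Gamma>\<close> extended by the derived clauses
  have the same cost, and every model of the latter sets the derived units \<open>b\<^sub>i\<close> to 1, so it costs
  at least \<open>k\<close>; if the units \<open>\<not>b\<^sub>j\<close> are derived too, it costs exactly \<open>k\<close>.\<close>

lemma lit_val_neglit [simp]: "lit_val \<tau> (neglit l) \<longleftrightarrow> \<not> lit_val \<tau> l"
  by (cases l) auto

lemma models_iff_no_falsified: "models \<tau> F \<longleftrightarrow> (\<forall>c\<in>F. \<not> falsifies \<tau> c)"
  unfolding models_def falsifies_def by blast

lemma lit_val_comp_assign: "lit_val (comp_assign \<tau> \<sigma>) l = sv_val \<tau> (applit \<sigma> l)"
  by (cases l; cases "\<sigma> (var l)") (auto simp: comp_assign_def)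

lemma sat_comp_assign_iff_restrict:
  "(\<exists>l\<in>c. lit_val (comp_assign \<tau> \<sigma>) l) \<longleftrightarrow>
     (case restrict \<sigma> c of None \<Rightarrow> True | Some c' \<Rightarrow> \<exists>l\<in>c'. lit_val \<tau> l)"
  unfolding restrict_def lit_val_comp_assign
  by (auto elim!: sv_val.elims) (metis sv_val.simps)+

lemma models_restrict_cnf_iff:
  "models \<tau> (restrict_cnf \<sigma> F) \<longleftrightarrow> models (comp_assign \<tau> \<sigma>) F"
  unfolding models_def restrict_cnf_def
  by (force simp: sat_comp_assign_iff_restrict split: option.splits)

lemma comp_assign_negC: "falsifies \<tau> c \<Longrightarrow> comp_assign \<tau> (negC c) = \<tau>"
  unfolding falsifies_def by (rule ext) (force simp: comp_assign_def negC_def)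

lemma up_refutes_unsat: "up_refutes F \<Longrightarrow> \<not> models \<tau> F"
proof (induction rule: up_refutes.induct)
  case (empty F)
  then show ?case unfolding models_def by blast
next
  case (unit l F)
  show ?case
  proof
    assume "models \<tau> F"
    with unit.hyps have "lit_val \<tau> l" unfolding models_def by blast
    with \<open>models \<tau> F\<close> have "models \<tau> (propagate l F)"
      unfolding models_def propagate_def by fastforce
    with unit.IH show False ..
  qed
qed

lemma rup_sound: "rup F d \<Longrightarrow> models \<tau> F \<Longrightarrow> \<not> falsifies \<tau> d"
proof
  assume "rup F d" "models \<tau> F" "falsifies \<tau> d"
  then have "\<not> tautology d"
    unfolding tautology_def falsifies_def by (metis lit_val.simps)
  with \<open>rup F d\<close> have "up_refutes (restrict_cnf (negC d) F)"
    unfolding rup_def by blast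
  moreover have "models \<tau> (restrict_cnf (negC d) F)"
    using \<open>models \<tau> F\<close> \<open>falsifies \<tau> d\<close> by (simp add: models_restrict_cnf_iff comp_assign_negC)
  ultimately show False
    using up_refutes_unsat by blast
qed

lemma cost_SR_wit_repairs:
  assumes wit: "cost_SR_wit b m F c \<sigma>" and "models \<tau> F" and "falsifies \<tau> c"
  shows "models (comp_assign \<tau> \<sigma>) (insert c F)"
    and "cost_assign b m (comp_assign \<tau> \<sigma>) \<le> cost_assign b m \<tau>"
proof -
  have "models \<tau> (restrict_cnf (negC c) F)"
    using assms(2,3) by (simp add: models_restrict_cnf_iff comp_assign_negC)
  then have "models \<tau> (restrict_cnf \<sigma> (F \<union> {c}))"
    using wit rup_sound unfolding cost_SR_wit_def models_iff_no_falsified by blast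
  then show "models (comp_assign \<tau> \<sigma>) (insert c F)"
    by (simp add: models_restrict_cnf_iff)
  show "cost_assign b m (comp_assign \<tau> \<sigma>) \<le> cost_assign b m \<tau>"
    using wit \<open>falsifies \<tau> c\<close> unfolding cost_SR_wit_def by blast
qed

lemma deriv_step_falsified_imp_cost_SR:
  assumes "deriv_step b m G E d" and "models \<tau> (G \<union> E)" and "falsifies \<tau> d"
  shows "\<exists>\<sigma>. cost_SR_wit b m (G \<union> E) d \<sigma>"
proof -
  have "\<not> (\<exists>a\<in>G \<union> E. a \<subseteq> d)"
    using assms(2,3) unfolding models_iff_no_falsified falsifies_def by blast
  moreover have "\<not> (insert (Pos x) a \<in> G \<union> E \<and> insert (Neg x) a' \<in> G \<union> E \<and> d = a \<union> a')"
    for a a' x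
    using assms(2,3) unfolding models_iff_no_falsified falsifies_def
    by (metis Un_iff insert_iff lit_val.simps)
  ultimately show ?thesis
    using assms(1) unfolding deriv_step_def by blast
qed

lemma deriv_step_preserves_model:
  assumes "deriv_step b m G E d" and "models \<tau> (G \<union> E)"
  obtains \<tau>' where "models \<tau>' (insert d (G \<union> E))" and "cost_assign b m \<tau>' \<le> cost_assign b m \<tau>"
proof (cases "falsifies \<tau> d")
  case True
  with assms obtain \<sigma> where "cost_SR_wit b m (G \<union> E) d \<sigma>"
    using deriv_step_falsified_imp_cost_SR by blast
  with assms(2) True show ?thesis
    using cost_SR_wit_repairs that by blast
next
  case False
  with assms(2) show ?thesis
    using that by (simp add: models_iff_no_falsified)
qed

lemma cost_SR_derivation_snoc:
  "cost_SR_derivation b m G (ds @ [d]) \<longleftrightarrow>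
     cost_SR_derivation b m G ds \<and> deriv_step b m G (set ds) d"
  unfolding cost_SR_derivation_def by (auto simp: nth_append less_Suc_eq)

lemma cost_SR_derivation_preserves_model:
  assumes "cost_SR_derivation b m G ds" and "models \<tau> G"
  obtains \<tau>' where "models \<tau>' (G \<union> set ds)" and "cost_assign b m \<tau>' \<le> cost_assign b m \<tau>"
  using assms(1)
proof (induction ds arbitrary: thesis rule: rev_induct)
  case Nil
  with assms(2) show ?case by simp
next
  case (snoc d ds)
  then obtain \<tau>' where "models \<tau>' (G \<union> set ds)" "cost_assign b m \<tau>' \<le> cost_assign b m \<tau>"
    and "deriv_step b m G (set ds) d"
    by (auto simp: cost_SR_derivation_snoc)
  then show ?case
    using snoc.prems(1) by (elim deriv_step_preserves_model) (auto simp: Un_insert_right)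
qed

lemma cost_assign_eq_card: "cost_assign b m \<tau> = card {i. i < m \<and> \<tau> (b i)}"
  unfolding cost_assign_def by (simp add: sum.If_cases Int_def conj_commute)

lemma cost_cnf_antimono: "F \<subseteq> F' \<Longrightarrow> cost_cnf b m F \<le> cost_cnf b m F'"
  unfolding cost_cnf_def models_def by (rule INF_superset_mono) auto

lemma cost_cnf_lower_bound:
  "(\<And>\<tau>. models \<tau> F \<Longrightarrow> k \<le> cost_assign b m \<tau>) \<Longrightarrow> enat k \<le> cost_cnf b m F"
  unfolding cost_cnf_def by (auto intro: INF_greatest)

lemma cost_cnf_eq_if_cost_constant:
  assumes "models \<tau> F" and "\<And>\<tau>. models \<tau> F \<Longrightarrow> cost_assign b m \<tau> = k"
  shows "cost_cnf b m F = enat k"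
proof (rule antisym)
  show "cost_cnf b m F \<le> enat k"
    unfolding cost_cnf_def using assms by (metis INF_lower mem_Collect_eq)
  show "enat k \<le> cost_cnf b m F"
    using assms(2) by (auto intro: cost_cnf_lower_bound)
qed

lemma cost_cnf_cost_SR_derivation:
  assumes "cost_SR_derivation b m G ds"
  shows "cost_cnf b m (G \<union> set ds) = cost_cnf b m G"
proof (rule antisym)
  show "cost_cnf b m (G \<union> set ds) \<le> cost_cnf b m G"
    unfolding cost_cnf_def
  proof (rule INF_greatest)
    fix \<tau> assume "\<tau> \<in> {\<tau>. models \<tau> G}"
    with assms obtain \<tau>' where "models \<tau>' (G \<union> set ds)" "cost_assign b m \<tau>' \<le> cost_assign b m \<tau>"
      using cost_SR_derivation_preserves_model by blast
    then show "(INF \<tau>\<in>{\<tau>. models \<tau> (G \<union> set ds)}. enat (cost_assign b m \<tau>)) \<le> enat (cost_assign b m \<tau>)"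
      by (auto intro: INF_lower2)
  qed
  show "cost_cnf b m G \<le> cost_cnf b m (G \<union> set ds)"
    by (rule cost_cnf_antimono) blast
qed

lemma models_unit: "models \<tau> F \<Longrightarrow> {l} \<in> F \<Longrightarrow> lit_val \<tau> l"
  unfolding models_def by blast

theorem theorem4p2:
  fixes H :: "'v cnf" and C :: "nat \<Rightarrow> 'v clause" and b :: "nat \<Rightarrow> 'v"
    and m :: nat and ds :: "'v clause list" and I :: "nat set"
  assumes inst: "maxsat_instance H C b m"
    and der: "cost_SR_derivation b m (maxsat_cnf H C b m) ds"
    and I: "I \<subseteq> {..<m}"
    and units: "\<forall>i\<in>I. {Pos (b i)} \<in> set ds"
  shows "enat (card I) \<le> cost_cnf b m (maxsat_cnf H C b m) \<and>
         ((\<forall>j<m. j \<notin> I \<longrightarrow> {Neg (b j)} \<in> set ds)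
          \<longrightarrow> (\<exists>\<alpha>. models \<alpha> (maxsat_cnf H C b m))
          \<longrightarrow> cost_cnf b m (maxsat_cnf H C b m) = enat (card I))"
proof -
  let ?G = "maxsat_cnf H C b m"
  let ?D = "?G \<union> set ds"
  have cost_D: "cost_cnf b m ?D = cost_cnf b m ?G"
    using der by (rule cost_cnf_cost_SR_derivation)
  have blocked: "I \<subseteq> {i. i < m \<and> \<tau> (b i)}" if "models \<tau> ?D" for \<tau>
    using I units models_unit[OF that] by fastforce
  have "enat (card I) \<le> cost_cnf b m ?G"
    unfolding cost_D[symmetric]
    by (rule cost_cnf_lower_bound) (auto simp: cost_assign_eq_card intro!: card_mono dest: blocked)
  moreover have "cost_cnf b m ?G = enat (card I)"
    if negs: "\<forall>j<m. j \<notin> I \<longrightarrow> {Neg (b j)} \<in> set ds" and "models \<alpha> ?G" for \<alpha>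
  proof -
    obtain \<tau> where "models \<tau> ?D"
      using der \<open>models \<alpha> ?G\<close> by (rule cost_SR_derivation_preserves_model)
    moreover have "cost_assign b m \<tau>' = card I" if "models \<tau>' ?D" for \<tau>'
    proof -
      have "{i. i < m \<and> \<tau>' (b i)} = I"
        using blocked[OF that] negs models_unit[OF that] by fastforce
      then show ?thesis by (simp add: cost_assign_eq_card)
    qed
    ultimately show ?thesis
      unfolding cost_D[symmetric] by (rule cost_cnf_eq_if_cost_constant)
  qed
  ultimately show ?thesis by blast
qed

end
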